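(* Let $(A,A^* )$ be a left-symmetric bialgebroid. Then for all $x\in\Gamma(A)$ and $\xi\in\Gamma(A^* )$, $$[a_A(x),a_{A^*}(\xi)]=a_{A^*}(L^*_x\xi)-a_A(L^*_\xi x),$$ where the left side is the commutator of vector fields, $L^*_x\xi\in\Gamma(A^* )$ is given by $\langle L^*_x\xi,y\rangle=a_A(x)\langle\xi,y\rangle-\langle\xi,x\cdot_Ay\rangle$, and $L^*_\xi x\in\Gamma(A)$ by $\langle L^*_\xi x,\eta\rangle=a_{A^*}(\xi)\langle x,\eta\rangle-\langle x,\xi\cdot_{A^*}\eta\rangle$.
   Context: A left-symmetric algebroid is a vector bundle $A\to M$ with an $\mathbb R$-bilinear multiplication $\cdot_A$ on $\Gamma(A)$ with $x\cdot_A(y\cdot_Az)-(x\cdot_Ay)\cdot_Az$ symmetric in $x,y$, and an anchor $a_A:A\to TM$ with $x\cdot_A(fy)=f(x\cdot_Ay)+a_A(x)(f)y$, $(fx)\cdot_Ay=f(x\cdot_Ay)$; $[x,y]_A=x\cdot_Ay-y\cdot_Ax$. The coboundary $\delta:C^n(A)\to C^{n+1}(A)$, $C^{n+1}(A)=\Gamma(\wedge^nA^*\otimes A^* )$, is $\delta\varphi(x_1,\dots,x_{n+1})=\sum_{i=1}^n(-1)^{i+1}a_A(x_i)\varphi(\dots,\hat{x_i},\dots,x_{n+1})-\sum_{i=1}^n(-1)^{i+1}\varphi(\dots,\hat{x_i},\dots,x_n,x_i\cdot_Ax_{n+1})+\sum_{i<j\le n}(-1)^{i+j}\varphi([x_i,x_j]_A,\dots,\hat{x_i},\dots,\hat{x_j},\dots,x_{n+1})$.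 The Lie derivative $\mathfrak L_x$ on $\Gamma(A\otimes A)$ is $\mathfrak L_x(y_1\otimes y_2)=(x\cdot_Ay_1)\otimes y_2+y_1\otimes[x,y_2]_A$. For left-symmetric algebroids $A$ and $A^*$ on dual bundles, $[\cdot,\cdot]_{A^*}$, $\delta_*$, $\mathfrak L_\xi$ are defined by the same formulas with $A$ and $A^*$ exchanged. $(A,A^* )$ is a left-symmetric bialgebroid if $\delta[\xi,\eta]_{A^*}=\mathfrak L_\xi\delta\eta-\mathfrak L_\eta\delta\xi$ and $\delta_*[x,y]_A=\mathfrak L_x\delta_*y-\mathfrak L_y\delta_*x$ for all $x,y\in\Gamma(A)$, $\xi,\eta\in\Gamma(A^* )$. *)

theory Defs
  imports Complex_Main
begin

text \<open>Algebraic (Serre--Swan) model.  The ring of smooth functions C-infinity(M) is an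
abstract commutative real algebra of type 'r.  Vector fields on M are the real-linear
derivations of 'r, and the commutator of vector fields is the commutator of derivations.
Gamma(A) is an 'r-module of type 'x, Gamma(A*) an 'r-module of type 'e, with the
C-infinity(M)-bilinear duality pairing p.  That A is a (finite rank) vector bundle and A*
its dual bundle is encoded by a finite dual basis (xb i, eb i), i < n, of the pairing.\<close>

definition derivation :: "('r::{comm_ring_1,real_algebra_1} \<Rightarrow> 'r) \<Rightarrow> bool" where
  "derivation D \<longleftrightarrow>
     (\<forall>f g. D (f + g) = D f + D g) \<and>
     (\<forall>(c::real) f. D (c *\<^sub>R f) = c *\<^sub>R D f) \<and>
     (\<forall>f g. D (f * g) = f * D g + g * D f)"

definition vf_bracket :: "('r \<Rightarrow> 'r) \<Rightarrow> ('r \<Rightarrow> 'r) \<Rightarrow> ('r::comm_ring_1 \<Rightarrow> 'r)" where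
  "vf_bracket X Y = (\<lambda>f. X (Y f) - Y (X f))"

definition dual_bundle_pair ::
  "('r::comm_ring_1 \<Rightarrow> 'x::ab_group_add \<Rightarrow> 'x) \<Rightarrow> ('r \<Rightarrow> 'e::ab_group_add \<Rightarrow> 'e) \<Rightarrow>
   ('x \<Rightarrow> 'e \<Rightarrow> 'r) \<Rightarrow> nat \<Rightarrow> (nat \<Rightarrow> 'x) \<Rightarrow> (nat \<Rightarrow> 'e) \<Rightarrow> bool" where
  "dual_bundle_pair sA sE p n xb eb \<longleftrightarrow>
     module sA \<and> module sE \<and>
     (\<forall>x y \<eta>. p (x + y) \<eta> = p x \<eta> + p y \<eta>) \<and>
     (\<forall>f x \<eta>. p (sA f x) \<eta> = f * p x \<eta>) \<and>
     (\<forall>x \<eta> \<zeta>. p x (\<eta> + \<zeta>) = p x \<eta> + p x \<zeta>) \<and>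
     (\<forall>f x \<eta>. p x (sE f \<eta>) = f * p x \<eta>) \<and>
     (\<forall>y. y = (\<Sum>i<n. sA (p y (eb i)) (xb i))) \<and>
     (\<forall>\<eta>. \<eta> = (\<Sum>i<n. sE (p (xb i) \<eta>) (eb i)))"

definition left_symmetric_algebroid ::
  "('r::{comm_ring_1,real_algebra_1} \<Rightarrow> 'x::ab_group_add \<Rightarrow> 'x) \<Rightarrow> ('x \<Rightarrow> 'x \<Rightarrow> 'x) \<Rightarrow>
   ('x \<Rightarrow> 'r \<Rightarrow> 'r) \<Rightarrow> bool" where
  "left_symmetric_algebroid s mu a \<longleftrightarrow>
     module s \<and>
     (\<forall>x y z. mu x (y + z) = mu x y + mu x z) \<and>
     (\<forall>x y z. mu (x + y) z = mu x z + mu y z) \<and>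
     (\<forall>(c::real) x y. mu x (s (c *\<^sub>R 1) y) = s (c *\<^sub>R 1) (mu x y)) \<and>
     (\<forall>x y z. mu x (mu y z) - mu (mu x y) z = mu y (mu x z) - mu (mu y x) z) \<and>
     (\<forall>x. derivation (a x)) \<and>
     (\<forall>x y. a (x + y) = (\<lambda>f. a x f + a y f)) \<and>
     (\<forall>f x. a (s f x) = (\<lambda>g. f * a x g)) \<and>
     (\<forall>x f y. mu x (s f y) = s f (mu x y) + s (a x f) y) \<and>
     (\<forall>f x y. mu (s f x) y = s f (mu x y))"

definition lsa_bracket :: "('x \<Rightarrow> 'x \<Rightarrow> 'x) \<Rightarrow> 'x \<Rightarrow> 'x \<Rightarrow> 'x::ab_group_add" where
  "lsa_bracket mu x y = mu x y - mu y x"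

text \<open>Sections of A* (x) A* are represented as C-infinity-bilinear forms on Gamma(A), the
decomposable tensor eta1 (x) eta2 being (y1,y2) |-> <y1,eta1><y2,eta2>.\<close>
definition cobound1 :: "('x \<Rightarrow> 'x \<Rightarrow> 'x) \<Rightarrow> ('x \<Rightarrow> 'r \<Rightarrow> 'r) \<Rightarrow> ('x \<Rightarrow> 'e \<Rightarrow> 'r) \<Rightarrow>
    'e \<Rightarrow> ('x \<Rightarrow> 'x \<Rightarrow> 'r::comm_ring_1)" where
  "cobound1 mu a p \<eta> = (\<lambda>y1 y2. a y1 (p y2 \<eta>) - p (mu y1 y2) \<eta>)"

text \<open>Lie derivative on Gamma(A* (x) A*) along xi in Gamma(A*), for the left-symmetric
algebroid structure (sE, muE) on A*: defined on decomposable tensors by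
L_xi(eta1 (x) eta2) = (xi.eta1) (x) eta2 + eta1 (x) [xi,eta2], and applied to the
decomposition Phi = sum_{i,j} (Phi(xb i, xb j) eb i) (x) eb j of a tensor Phi.\<close>
definition lie_tensor :: "('r \<Rightarrow> 'e \<Rightarrow> 'e) \<Rightarrow> ('e \<Rightarrow> 'e \<Rightarrow> 'e::ab_group_add) \<Rightarrow>
    ('x \<Rightarrow> 'e \<Rightarrow> 'r::comm_ring_1) \<Rightarrow> nat \<Rightarrow> (nat \<Rightarrow> 'x) \<Rightarrow> (nat \<Rightarrow> 'e) \<Rightarrow>
    'e \<Rightarrow> ('x \<Rightarrow> 'x \<Rightarrow> 'r) \<Rightarrow> ('x \<Rightarrow> 'x \<Rightarrow> 'r)" where
  "lie_tensor sE muE p n xb eb \<xi> \<Phi> = (\<lambda>z1 z2.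
     \<Sum>i<n. \<Sum>j<n.
       p z1 (muE \<xi> (sE (\<Phi> (xb i) (xb j)) (eb i))) * p z2 (eb j)
     + p z1 (sE (\<Phi> (xb i) (xb j)) (eb i)) * p z2 (lsa_bracket muE \<xi> (eb j)))"

text \<open>Left-symmetric bialgebroid (A, A*).  The second compatibility condition is the first
with the roles of A and A* exchanged (pairing flipped, dual basis swapped).\<close>
definition ls_bialgebroid ::
  "('r::{comm_ring_1,real_algebra_1} \<Rightarrow> 'x::ab_group_add \<Rightarrow> 'x) \<Rightarrow> ('x \<Rightarrow> 'x \<Rightarrow> 'x) \<Rightarrow> ('x \<Rightarrow> 'r \<Rightarrow> 'r) \<Rightarrow>
   ('r \<Rightarrow> 'e::ab_group_add \<Rightarrow> 'e) \<Rightarrow> ('e \<Rightarrow> 'e \<Rightarrow> 'e) \<Rightarrow> ('e \<Rightarrow> 'r \<Rightarrow> 'r) \<Rightarrow>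
   ('x \<Rightarrow> 'e \<Rightarrow> 'r) \<Rightarrow> nat \<Rightarrow> (nat \<Rightarrow> 'x) \<Rightarrow> (nat \<Rightarrow> 'e) \<Rightarrow> bool" where
  "ls_bialgebroid sA muA aA sE muE aE p n xb eb \<longleftrightarrow>
     dual_bundle_pair sA sE p n xb eb \<and>
     left_symmetric_algebroid sA muA aA \<and>
     left_symmetric_algebroid sE muE aE \<and>
     (\<forall>\<xi> \<eta>. cobound1 muA aA p (lsa_bracket muE \<xi> \<eta>) =
        (\<lambda>z1 z2. lie_tensor sE muE p n xb eb \<xi> (cobound1 muA aA p \<eta>) z1 z2
                - lie_tensor sE muE p n xb eb \<eta> (cobound1 muA aA p \<xi>) z1 z2)) \<and>
     (\<forall>x y. cobound1 muE aE (\<lambda>\<eta> z. p z \<eta>) (lsa_bracket muA x y) =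
        (\<lambda>\<zeta>1 \<zeta>2. lie_tensor sA muA (\<lambda>\<eta> z. p z \<eta>) n eb xb x (cobound1 muE aE (\<lambda>\<eta> z. p z \<eta>) y) \<zeta>1 \<zeta>2
                - lie_tensor sA muA (\<lambda>\<eta> z. p z \<eta>) n eb xb y (cobound1 muE aE (\<lambda>\<eta> z. p z \<eta>) x) \<zeta>1 \<zeta>2))"

definition dual_action_A :: "('x \<Rightarrow> 'x \<Rightarrow> 'x) \<Rightarrow> ('x \<Rightarrow> 'r \<Rightarrow> 'r) \<Rightarrow> ('x \<Rightarrow> 'e \<Rightarrow> 'r::comm_ring_1) \<Rightarrow>
    'x \<Rightarrow> 'e \<Rightarrow> 'e" where
  "dual_action_A muA aA p x \<xi> = (THE \<zeta>. \<forall>y. p y \<zeta> = aA x (p y \<xi>) - p (muA x y) \<xi>)"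

definition dual_action_E :: "('e \<Rightarrow> 'e \<Rightarrow> 'e) \<Rightarrow> ('e \<Rightarrow> 'r \<Rightarrow> 'r) \<Rightarrow> ('x \<Rightarrow> 'e \<Rightarrow> 'r::comm_ring_1) \<Rightarrow>
    'e \<Rightarrow> 'x \<Rightarrow> 'x" where
  "dual_action_E muE aE p \<xi> x = (THE z. \<forall>\<eta>. p z \<eta> = aE \<xi> (p x \<eta>) - p x (muE \<xi> \<eta>))"

end

theory Submission
  imports Defs
begin

text \<open>Evaluated on \<open>(x, y)\<close>, the Lie derivative term of the first compatibility
  condition is \<open>L\<^sub>\<xi>(\<delta>\<eta>)(x, y) = \<langle>y, [\<xi>, L\<^sup>*\<^sub>x\<eta>]\<rangle> - \<delta>\<eta>(L\<^sup>*\<^sub>\<xi>x, y)\<close>.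
  Comparing the condition for \<open>(\<xi>, f\<eta>)\<close> with \<open>f\<close> times the condition for \<open>(\<xi>, \<eta>)\<close>,
  everything cancels except
  \<open>([a(x), a(\<xi>)] - a(L\<^sup>*\<^sub>x\<xi>) + a(L\<^sup>*\<^sub>\<xi>x))(f) \<cdot> \<langle>y, \<eta>\<rangle>\<close>, which therefore
  vanishes. This defect is \<open>C\<^sup>\<infinity>(M)\<close>-linear in \<open>x\<close>, so expanding \<open>x\<close> in the dual
  basis shows that it is zero.\<close>

locale dual_bundles =
  fixes sA :: "'r::{comm_ring_1,real_algebra_1} \<Rightarrow> 'x::ab_group_add \<Rightarrow> 'x"
    and sE :: "'r \<Rightarrow> 'e::ab_group_add \<Rightarrow> 'e"
    and p :: "'x \<Rightarrow> 'e \<Rightarrow> 'r" and n :: nat and xb :: "nat \<Rightarrow> 'x" and eb :: "nat \<Rightarrow> 'e"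
  assumes dual_bundle_pair: "dual_bundle_pair sA sE p n xb eb"
begin

lemma pair_add_left: "p (x + y) \<eta> = p x \<eta> + p y \<eta>"
  and pair_scale_left: "p (sA f x) \<eta> = f * p x \<eta>"
  and pair_add_right: "p x (\<eta> + \<zeta>) = p x \<eta> + p x \<zeta>"
  and pair_scale_right: "p x (sE f \<eta>) = f * p x \<eta>"
  and expand_left: "y = (\<Sum>i<n. sA (p y (eb i)) (xb i))"
  and expand_right: "\<eta> = (\<Sum>i<n. sE (p (xb i) \<eta>) (eb i))"
  using dual_bundle_pair unfolding dual_bundle_pair_def by blast+

sublocale pair_left: additive "\<lambda>x. p x \<eta>" for \<eta>
  by unfold_locales (rule pair_add_left)

sublocale pair_right: additive "p x" for x
  by unfold_locales (rule pair_add_right)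

lemma linear_left_expand:
  assumes "\<And>y z. F (y + z) = F y + F z" and "\<And>g y. F (sA g y) = g * F y"
  shows "F y = (\<Sum>i<n. p y (eb i) * F (xb i))"
proof -
  interpret F: additive F by unfold_locales fact
  have "F y = F (\<Sum>i<n. sA (p y (eb i)) (xb i))" using expand_left by metis
  also have "\<dots> = (\<Sum>i<n. p y (eb i) * F (xb i))" by (simp add: F.sum assms(2))
  finally show ?thesis .
qed

lemma sections_left_eqI:
  assumes "\<And>\<eta>. p x \<eta> = p y \<eta>"
  shows "x = y"
  by (metis (no_types, lifting) assms expand_left sum.cong)

lemma linear_right_represented:
  assumes "\<And>\<eta> \<zeta>. F (\<eta> + \<zeta>) = F \<eta> + F \<zeta>" and "\<And>g \<eta>. F (sE g \<eta>) = g * F \<eta>"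
  shows "\<exists>!w. \<forall>\<eta>. p w \<eta> = F \<eta>"
proof
  interpret F: additive F by unfold_locales fact
  let ?w = "\<Sum>i<n. sA (F (eb i)) (xb i)"
  show represents: "\<forall>\<eta>. p ?w \<eta> = F \<eta>"
  proof
    fix \<eta>
    have "F \<eta> = F (\<Sum>i<n. sE (p (xb i) \<eta>) (eb i))" using expand_right by metis
    also have "\<dots> = (\<Sum>i<n. p (xb i) \<eta> * F (eb i))" by (simp add: F.sum assms(2))
    finally show "p ?w \<eta> = F \<eta>" by (simp add: pair_left.sum pair_scale_left mult.commute)
  qed
  show "\<And>w. \<forall>\<eta>. p w \<eta> = F \<eta> \<Longrightarrow> w = ?w"
    using represents sections_left_eqI by metis
qed

end

lemma dual_bundles_swap:
  "dual_bundles sA sE p n xb eb \<Longrightarrow> dual_bundles sE sA (\<lambda>\<eta> x. p x \<eta>) n eb xb"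
  unfolding dual_bundles_def dual_bundle_pair_def by (auto simp: mult.commute)

locale ls_algebroid =
  fixes s :: "'r::{comm_ring_1,real_algebra_1} \<Rightarrow> 'x::ab_group_add \<Rightarrow> 'x"
    and mu :: "'x \<Rightarrow> 'x \<Rightarrow> 'x" and a :: "'x \<Rightarrow> 'r \<Rightarrow> 'r"
  assumes left_symmetric_algebroid: "left_symmetric_algebroid s mu a"
begin

lemma scale_module: "module s"
  and mult_add_right: "mu x (y + z) = mu x y + mu x z"
  and mult_add_left: "mu (x + y) z = mu x z + mu y z"
  and anchor_derivation: "derivation (a x)"
  and anchor_add: "a (x + y) f = a x f + a y f"
  and anchor_scale: "a (s f x) g = f * a x g"
  and mult_scale_right: "mu x (s f y) = s f (mu x y) + s (a x f) y"
  and mult_scale_left: "mu (s f x) y = s f (mu x y)"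
  using left_symmetric_algebroid unfolding left_symmetric_algebroid_def by simp_all

sublocale anchor: additive "a x" for x
  using anchor_derivation by unfold_locales (simp add: derivation_def)

lemma anchor_mult: "a x (f * g) = f * a x g + g * a x f"
  using anchor_derivation unfolding derivation_def by blast

sublocale bracket: additive "lsa_bracket mu x" for x
  by unfold_locales (simp add: lsa_bracket_def mult_add_right mult_add_left algebra_simps)

lemma bracket_scale_right: "lsa_bracket mu x (s f y) = s f (lsa_bracket mu x y) + s (a x f) y"
  unfolding lsa_bracket_def
  by (simp add: mult_scale_right mult_scale_left module.scale_right_diff_distrib[OF scale_module])

lemma bracket_scale_left: "lsa_bracket mu (s f y) x = s f (lsa_bracket mu y x) - s (a x f) y"
  unfolding lsa_bracket_def
  by (simp add: mult_scale_right mult_scale_left module.scale_right_diff_distrib[OF scale_module])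

end

context dual_bundles
begin

lemma pair_dual_action_E:
  assumes "ls_algebroid sE muE aE"
  shows "p (dual_action_E muE aE p \<xi> z) \<theta> = aE \<xi> (p z \<theta>) - p z (muE \<xi> \<theta>)"
proof -
  interpret E: ls_algebroid sE muE aE by fact
  have "\<exists>!w. \<forall>\<theta>. p w \<theta> = aE \<xi> (p z \<theta>) - p z (muE \<xi> \<theta>)"
    by (rule linear_right_represented)
      (simp_all add: pair_add_right pair_scale_right E.anchor.add E.anchor_mult
        E.mult_add_right E.mult_scale_right algebra_simps)
  from theI'[OF this] show ?thesis unfolding dual_action_E_def by blast
qed

lemma lie_tensor_eq:
  assumes "ls_algebroid sE muE aE"
    and "\<And>u v y. \<Phi> (u + v) y = \<Phi> u y + \<Phi> v y" and "\<And>g u y. \<Phi> (sA g u) y = g * \<Phi> u y"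
    and "\<And>u y y'. \<Phi> u (y + y') = \<Phi> u y + \<Phi> u y'" and "\<And>g u y. \<Phi> u (sA g y) = g * \<Phi> u y"
    and represents: "\<And>y. p y \<beta> = \<Phi> z1 y"
  shows "lie_tensor sE muE p n xb eb \<xi> \<Phi> z1 z2
     = p z2 (lsa_bracket muE \<xi> \<beta>) - \<Phi> (dual_action_E muE aE p \<xi> z1) z2"
proof -
  interpret E: ls_algebroid sE muE aE by fact
  define w where "w = dual_action_E muE aE p \<xi> z1"
  define br where "br = lsa_bracket muE \<xi>"
  have mult_\<xi>: "p z1 (muE \<xi> \<theta>) = aE \<xi> (p z1 \<theta>) - p w \<theta>" for \<theta>
    unfolding w_def by (simp add: pair_dual_action_E[OF assms(1)])
  have expand_first: "\<Phi> u (xb j) = (\<Sum>i<n. p u (eb i) * \<Phi> (xb i) (xb j))" for u j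
    by (rule linear_left_expand) (simp_all add: assms(2,3))
  have expand_second: "\<Phi> w z2 = (\<Sum>j<n. p z2 (eb j) * \<Phi> w (xb j))"
    by (rule linear_left_expand) (simp_all add: assms(4,5))
  have "lie_tensor sE muE p n xb eb \<xi> \<Phi> z1 z2 =
     (\<Sum>i<n. \<Sum>j<n. (aE \<xi> (\<Phi> (xb i) (xb j) * p z1 (eb i)) - \<Phi> (xb i) (xb j) * p w (eb i))
        * p z2 (eb j) + \<Phi> (xb i) (xb j) * p z1 (eb i) * p z2 (br (eb j)))"
    unfolding lie_tensor_def br_def by (simp add: mult_\<xi> pair_scale_right)
  also have "\<dots> = (\<Sum>j<n. \<Sum>i<n. aE \<xi> (p z1 (eb i) * \<Phi> (xb i) (xb j)) * p z2 (eb j)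
        - p w (eb i) * \<Phi> (xb i) (xb j) * p z2 (eb j)
        + p z1 (eb i) * \<Phi> (xb i) (xb j) * p z2 (br (eb j)))"
    by (subst sum.swap) (simp add: algebra_simps)
  also have "\<dots> = (\<Sum>j<n. aE \<xi> (\<Phi> z1 (xb j)) * p z2 (eb j) - \<Phi> w (xb j) * p z2 (eb j)
        + \<Phi> z1 (xb j) * p z2 (br (eb j)))"
    by (simp add: expand_first[of z1] expand_first[of w] sum.distrib sum_subtractf
        sum_distrib_right E.anchor.sum)
  also have "\<dots> = p z2 (br \<beta>) - \<Phi> w z2"
  proof -
    have "\<beta> = (\<Sum>j<n. sE (\<Phi> z1 (xb j)) (eb j))"
      using expand_right[of \<beta>] by (simp add: represents)
    then have "p z2 (br \<beta>) =
        (\<Sum>j<n. \<Phi> z1 (xb j) * p z2 (br (eb j)) + aE \<xi> (\<Phi> z1 (xb j)) * p z2 (eb j))"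
      unfolding br_def
      by (simp add: E.bracket.sum E.bracket_scale_right pair_right.sum pair_add_right
          pair_scale_right)
    then show ?thesis
      using expand_second by (simp add: sum.distrib sum_subtractf algebra_simps)
  qed
  finally show ?thesis unfolding w_def br_def .
qed

end

lemma dual_action_A_eq_swap: "dual_action_A muA aA p = dual_action_E muA aA (\<lambda>\<eta> x. p x \<eta>)"
  unfolding dual_action_A_def dual_action_E_def by (intro ext) simp

locale left_symmetric_bialgebroid =
  fixes sA :: "'r::{comm_ring_1,real_algebra_1} \<Rightarrow> 'x::ab_group_add \<Rightarrow> 'x"
    and muA :: "'x \<Rightarrow> 'x \<Rightarrow> 'x" and aA :: "'x \<Rightarrow> 'r \<Rightarrow> 'r"
    and sE :: "'r \<Rightarrow> 'e::ab_group_add \<Rightarrow> 'e"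
    and muE :: "'e \<Rightarrow> 'e \<Rightarrow> 'e" and aE :: "'e \<Rightarrow> 'r \<Rightarrow> 'r"
    and p :: "'x \<Rightarrow> 'e \<Rightarrow> 'r" and n :: nat and xb :: "nat \<Rightarrow> 'x" and eb :: "nat \<Rightarrow> 'e"
  assumes ls_bialgebroid: "ls_bialgebroid sA muA aA sE muE aE p n xb eb"
begin

sublocale A: ls_algebroid sA muA aA
  using ls_bialgebroid by unfold_locales (simp add: ls_bialgebroid_def)

sublocale E: ls_algebroid sE muE aE
  using ls_bialgebroid by unfold_locales (simp add: ls_bialgebroid_def)

sublocale dual_bundles sA sE p n xb eb
  using ls_bialgebroid by unfold_locales (simp add: ls_bialgebroid_def)

sublocale swapped: dual_bundles sE sA "\<lambda>\<eta> x. p x \<eta>" n eb xb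
  by (rule dual_bundles_swap) unfold_locales

abbreviation "\<delta> \<equiv> cobound1 muA aA p"
abbreviation "bracket_E \<equiv> lsa_bracket muE"
abbreviation "dual_A \<equiv> dual_action_A muA aA p"
abbreviation "dual_E \<equiv> dual_action_E muE aE p"

lemma compatibility:
  "\<delta> (bracket_E \<xi> \<eta>) z1 z2 =
     lie_tensor sE muE p n xb eb \<xi> (\<delta> \<eta>) z1 z2 - lie_tensor sE muE p n xb eb \<eta> (\<delta> \<xi>) z1 z2"
  using ls_bialgebroid unfolding ls_bialgebroid_def by metis

lemma pair_dual_E: "p (dual_E \<xi> z) \<theta> = aE \<xi> (p z \<theta>) - p z (muE \<xi> \<theta>)"
  by (rule pair_dual_action_E) unfold_locales

lemma pair_dual_A: "p y (dual_A z \<eta>) = aA z (p y \<eta>) - p (muA z y) \<eta>"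
  unfolding dual_action_A_eq_swap by (rule swapped.pair_dual_action_E[of muA aA]) unfold_locales

lemma lie_tensor_cobound1:
  "lie_tensor sE muE p n xb eb \<xi> (\<delta> \<eta>) z1 z2
     = p z2 (bracket_E \<xi> (dual_A z1 \<eta>)) - \<delta> \<eta> (dual_E \<xi> z1) z2"
  by (rule lie_tensor_eq)
    (unfold_locales, simp_all add: cobound1_def pair_dual_A pair_add_left pair_add_right
      pair_scale_left pair_scale_right A.anchor_add A.anchor_scale A.mult_add_left A.mult_add_right
      A.mult_scale_left A.anchor.add A.anchor_mult A.mult_scale_right algebra_simps)

lemma dual_A_scale_right: "dual_A z (sE f \<eta>) = sE f (dual_A z \<eta>) + sE (aA z f) \<eta>"
  by (rule swapped.sections_left_eqI)
    (simp add: pair_dual_A pair_add_right pair_scale_right pair_add_left pair_scale_left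
      A.mult_scale_right A.anchor_mult algebra_simps)

lemma dual_E_scale_left: "dual_E (sE f \<eta>) z = sA f (dual_E \<eta> z)"
  by (rule sections_left_eqI)
    (simp add: pair_dual_E pair_scale_left pair_scale_right E.anchor_scale E.mult_scale_left
      algebra_simps)

definition anchor_defect :: "'x \<Rightarrow> 'e \<Rightarrow> 'r \<Rightarrow> 'r" where
  "anchor_defect x \<xi> f = vf_bracket (aA x) (aE \<xi>) f - aE (dual_A x \<xi>) f + aA (dual_E \<xi> x) f"

lemma anchor_defect_mult_pair: "anchor_defect z1 \<xi> f * p z2 \<eta> = 0"
proof -
  have pair_bracket_scale:
    "p z (bracket_E \<xi> (sE f \<eta>)) = f * p z (bracket_E \<xi> \<eta>) + aE \<xi> f * p z \<eta>" for z
    by (simp add: E.bracket_scale_right pair_add_right pair_scale_right)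
  have cobound1_bracket_scale: "\<delta> (bracket_E \<xi> (sE f \<eta>)) z1 z2 = f * \<delta> (bracket_E \<xi> \<eta>) z1 z2
      + aA z1 f * p z2 (bracket_E \<xi> \<eta>) + aE \<xi> f * \<delta> \<eta> z1 z2 + aA z1 (aE \<xi> f) * p z2 \<eta>"
    by (simp add: cobound1_def pair_bracket_scale A.anchor.add A.anchor_mult algebra_simps)
  have bracket_dual_A_scale: "p z2 (bracket_E \<xi> (dual_A z1 (sE f \<eta>))) = f * p z2 (bracket_E \<xi> (dual_A z1 \<eta>))
      + aE \<xi> f * \<delta> \<eta> z1 z2 + aA z1 f * p z2 (bracket_E \<xi> \<eta>) + aE \<xi> (aA z1 f) * p z2 \<eta>"
    by (simp add: dual_A_scale_right E.bracket.add E.bracket_scale_right pair_add_right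
        pair_scale_right cobound1_def pair_dual_A algebra_simps)
  have cobound1_scale: "\<delta> (sE f \<eta>) (dual_E \<xi> z1) z2
      = f * \<delta> \<eta> (dual_E \<xi> z1) z2 + aA (dual_E \<xi> z1) f * p z2 \<eta>"
    by (simp add: cobound1_def pair_scale_right A.anchor_mult algebra_simps)
  have bracket_scale_dual_A: "p z2 (bracket_E (sE f \<eta>) (dual_A z1 \<xi>))
      = f * p z2 (bracket_E \<eta> (dual_A z1 \<xi>)) - aE (dual_A z1 \<xi>) f * p z2 \<eta>"
    by (simp add: E.bracket_scale_left pair_right.diff pair_scale_right)
  have cobound1_dual_E_scale: "\<delta> \<xi> (dual_E (sE f \<eta>) z1) z2 = f * \<delta> \<xi> (dual_E \<eta> z1) z2"
    by (simp add: dual_E_scale_left cobound1_def A.anchor_scale A.mult_scale_left pair_scale_left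
        algebra_simps)
  note compat_scaled = compatibility[of \<xi> "sE f \<eta>" z1 z2, unfolded lie_tensor_cobound1]
  note compat = compatibility[of \<xi> \<eta> z1 z2, unfolded lie_tensor_cobound1]
  show ?thesis
    using compat_scaled compat
    unfolding cobound1_bracket_scale bracket_dual_A_scale cobound1_scale bracket_scale_dual_A
      cobound1_dual_E_scale anchor_defect_def vf_bracket_def
    by (simp add: algebra_simps)
qed

lemma dual_E_add_right: "dual_E \<xi> (y + z) = dual_E \<xi> y + dual_E \<xi> z"
  by (rule sections_left_eqI) (simp add: pair_dual_E pair_add_left E.anchor.add algebra_simps)

lemma dual_E_scale_right: "dual_E \<xi> (sA g y) = sA g (dual_E \<xi> y) + sA (aE \<xi> g) y"
  by (rule sections_left_eqI)
    (simp add: pair_dual_E pair_scale_left pair_add_left E.anchor_mult algebra_simps)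

lemma dual_A_add_left: "dual_A (y + z) \<xi> = dual_A y \<xi> + dual_A z \<xi>"
  by (rule swapped.sections_left_eqI)
    (simp add: pair_dual_A pair_add_right pair_add_left A.anchor_add A.mult_add_left algebra_simps)

lemma dual_A_scale_left: "dual_A (sA g y) \<xi> = sE g (dual_A y \<xi>)"
  by (rule swapped.sections_left_eqI)
    (simp add: pair_dual_A pair_scale_right pair_scale_left A.anchor_scale A.mult_scale_left
      algebra_simps)

lemma anchor_defect_add:
  "anchor_defect (y + z) \<xi> f = anchor_defect y \<xi> f + anchor_defect z \<xi> f"
  by (simp add: anchor_defect_def vf_bracket_def dual_E_add_right dual_A_add_left A.anchor_add
      E.anchor_add E.anchor.add algebra_simps)

lemma anchor_defect_scale: "anchor_defect (sA g y) \<xi> f = g * anchor_defect y \<xi> f"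
  by (simp add: anchor_defect_def vf_bracket_def dual_E_scale_right dual_A_scale_left
      A.anchor_add A.anchor_scale E.anchor_scale E.anchor_mult algebra_simps)

lemma anchor_defect_eq_0: "anchor_defect x \<xi> f = 0"
proof -
  have "anchor_defect x \<xi> f = (\<Sum>i<n. p x (eb i) * anchor_defect (xb i) \<xi> f)"
    by (rule linear_left_expand) (simp_all add: anchor_defect_add anchor_defect_scale)
  also have "\<dots> = 0"
    using anchor_defect_mult_pair[of "xb _" \<xi> f x "eb _"] by (simp add: mult.commute)
  finally show ?thesis .
qed

theorem vf_bracket_anchors:
  "vf_bracket (aA x) (aE \<xi>) = (\<lambda>f. aE (dual_A x \<xi>) f - aA (dual_E \<xi> x) f)"
  using anchor_defect_eq_0 unfolding anchor_defect_def by (auto simp: algebra_simps)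

end

theorem mainTheorem4:
  fixes sA :: "'r::{comm_ring_1,real_algebra_1} \<Rightarrow> 'x::ab_group_add \<Rightarrow> 'x"
    and muA :: "'x \<Rightarrow> 'x \<Rightarrow> 'x" and aA :: "'x \<Rightarrow> 'r \<Rightarrow> 'r"
    and sE :: "'r \<Rightarrow> 'e::ab_group_add \<Rightarrow> 'e"
    and muE :: "'e \<Rightarrow> 'e \<Rightarrow> 'e" and aE :: "'e \<Rightarrow> 'r \<Rightarrow> 'r"
    and p :: "'x \<Rightarrow> 'e \<Rightarrow> 'r" and n :: nat and xb :: "nat \<Rightarrow> 'x" and eb :: "nat \<Rightarrow> 'e"
    and x :: 'x and \<xi> :: 'e
  assumes "ls_bialgebroid sA muA aA sE muE aE p n xb eb"
  shows "vf_bracket (aA x) (aE \<xi>) =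
           (\<lambda>f. aE (dual_action_A muA aA p x \<xi>) f - aA (dual_action_E muE aE p \<xi> x) f)"
proof -
  interpret left_symmetric_bialgebroid sA muA aA sE muE aE p n xb eb
    by unfold_locales fact
  show ?thesis by (rule vf_bracket_anchors)
qed

end
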